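(* For any admissible $F$-weighted boundary stratum $\mathcal{S}$ of genus $g$, the RM-torus $T_\mathcal{S}$ has dimension at most $g-1$.
   Context: $F$ is a totally real number field of degree $g$ with trace pairing $\langle x,y\rangle=\mathrm{Tr}_{F/\mathbb{Q}}(xy)$. For a lattice $\mathcal{I}\subset F$ (rank $g$ additive subgroup), $\mathcal{I}^\vee=\{x\in F:\langle x,y\rangle\in\mathbb{Z}\ \forall y\in\mathcal{I}\}$. An $\mathcal{I}$-weighted stable curve is a stable curve of arithmetic genus $g$ and geometric genus $0$ with an element of $\mathcal{I}$ attached to each branch at each node, such that the two branches at a node have opposite weights, the weights on each component sum to zero, and the weights span $\mathcal{I}$ ("$F$-weighted" = $\mathcal{I}$-weighted for some $\mathcal{I}$). An $F$-weighted boundary stratum $\mathcal{S}$ is the moduli space of weighted stable curves topologically equivalent (weight-preservingly) to a fixed one. $\mathrm{Sym}_{\mathbb{Q}}(F)\subset F\otimes_{\mathbb{Q}}F$ is the subspace of symmetric tensors, $\mathbf{S}_{\mathbb{Q}}(F)$ the quotient of $F\otimes_{\mathbb{Q}}F$ by the span of $x\otimes y-y\otimes x$ (and $\mathbf{S}_{\mathbb{Z}}(\mathcal{I}^\vee)$ the analogous quotient of $\mathcal{I}^\vee\otimes_{\mathbb{Z}}\mathcal{I}^\vee$), dual via $\langle a\otimes b,c\otimes d\rangle=\langle a,c\rangle\langle b,d\rangle$. $N(\mathcal{S})\subset\mathbf{S}_{\mathbb{Q}}(F)$ is the annihilator of the span of $r\otimes r$ over the weights $r$ of $\mathcal{S}$;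 $C(\mathcal{S})=\{x\in\mathbf{S}_{\mathbb{Q}}(F):\langle x,r\otimes r\rangle\ge 0\ \forall\text{ weights } r\}$. $\Lambda^1=\{x\in F\otimes_{\mathbb{Q}}F:\lambda x=x\lambda\ \forall\lambda\in F\}$ (for the natural $F$-bimodule structure), which lies in $\mathrm{Sym}_{\mathbb{Q}}(F)$, and $\mathrm{Ann}(\Lambda^1)\subset\mathbf{S}_{\mathbb{Q}}(F)$ is its annihilator. $\mathcal{S}$ is admissible if $C(\mathcal{S})\cap\mathrm{Ann}(\Lambda^1)\subset N(\mathcal{S})$. The ambient torus is $A_\mathcal{S}=\mathrm{Hom}_{\mathbb{Z}}(N(\mathcal{S})\cap\mathbf{S}_{\mathbb{Z}}(\mathcal{I}^\vee),\mathbb{G}_m)$, $p\colon A_\mathcal{S}\to\mathrm{Hom}(N(\mathcal{S})\cap\mathrm{Ann}(\Lambda^1)\cap\mathbf{S}_{\mathbb{Z}}(\mathcal{I}^\vee),\mathbb{G}_m)$ is the restriction map, and the RM-torus is $T_\mathcal{S}=p^{-1}(1)$, the kernel of $p$. *)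

theory Defs
  imports "HOL-Analysis.Analysis"
begin

definition qspanR :: "real set \<Rightarrow> real set" where
  "qspanR S = {(\<Sum>v\<in>T. real_of_rat (c v) * v) | T c. finite T \<and> T \<subseteq> S}"

definition zspanR :: "real set \<Rightarrow> real set" where
  "zspanR S = {(\<Sum>v\<in>T. real_of_int (c v) * v) | T c. finite T \<and> T \<subseteq> S}"

definition qindepR :: "real set \<Rightarrow> bool" where
  "qindepR S \<longleftrightarrow> (\<forall>T c. finite T \<and> T \<subseteq> S \<and> (\<Sum>v\<in>T. real_of_rat (c v) * v) = 0
                      \<longrightarrow> (\<forall>v\<in>T. c v = 0))"

definition qbasisR :: "real set \<Rightarrow> real set \<Rightarrow> bool" where
  "qbasisR B V \<longleftrightarrow> finite B \<and> B \<subseteq> V \<and> qindepR B \<and> qspanR B = V"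

definition qdimR :: "real set \<Rightarrow> nat" where
  "qdimR V = (if \<exists>B. qbasisR B V then card (SOME B. qbasisR B V) else 0)"

definition subfield_real :: "real set \<Rightarrow> bool" where
  "subfield_real F \<longleftrightarrow> 0 \<in> F \<and> 1 \<in> F \<and> (\<forall>x\<in>F. \<forall>y\<in>F. x + y \<in> F \<and> x * y \<in> F)
     \<and> (\<forall>x\<in>F. - x \<in> F \<and> (x \<noteq> 0 \<longrightarrow> inverse x \<in> F))"

definition number_field :: "real set \<Rightarrow> bool" where
  "number_field F \<longleftrightarrow> subfield_real F \<and> (\<exists>B. qbasisR B F)"

definition field_degree :: "real set \<Rightarrow> nat" where
  "field_degree F = qdimR F"

definition emb :: "real set \<Rightarrow> (real \<Rightarrow> complex) set" where
  "emb F = {\<sigma>. (\<forall>x\<in>F. \<forall>y\<in>F. \<sigma> (x + y) = \<sigma> x + \<sigma> y \<and> \<sigma> (x * y) = \<sigma> x * \<sigma> y)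
               \<and> \<sigma> 1 = 1 \<and> (\<forall>x. x \<notin> F \<longrightarrow> \<sigma> x = 0)}"

definition totally_real :: "real set \<Rightarrow> bool" where
  "totally_real F \<longleftrightarrow> number_field F \<and> (\<forall>\<sigma>\<in>emb F. \<forall>x\<in>F. \<sigma> x \<in> \<real>)"

text \<open>Trace (sum over all complex embeddings; real for totally real F).\<close>
definition tr :: "real set \<Rightarrow> real \<Rightarrow> real" where
  "tr F x = Re (\<Sum>\<sigma>\<in>emb F. \<sigma> x)"

text \<open>A lattice: a rank-g (finitely generated) additive subgroup of F, i.e. the
  Z-span of a Q-basis of F.\<close>
definition is_lattice :: "real set \<Rightarrow> real set \<Rightarrow> bool" where
  "is_lattice F I \<longleftrightarrow> (\<exists>B. qbasisR B F \<and> I = zspanR B)"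

definition dual_lattice :: "real set \<Rightarrow> real set \<Rightarrow> real set" where
  "dual_lattice F I = {x \<in> F. \<forall>y\<in>I. tr F (x * y) \<in> \<int>}"

text \<open>F \<otimes>_Q F is realised (injectively, F being totally real) inside the real
  matrices indexed by pairs of embeddings: a \<otimes> b \<mapsto> (\<sigma>(a) \<tau>(b))_{\<sigma>,\<tau>}.
  Under this model the pairing <a\<otimes>b, c\<otimes>d> = Tr(ac) Tr(bd) is the Frobenius pairing.\<close>

type_synonym tens = "(real \<Rightarrow> complex) \<Rightarrow> (real \<Rightarrow> complex) \<Rightarrow> real"

definition tensor :: "real set \<Rightarrow> real \<Rightarrow> real \<Rightarrow> tens" where
  "tensor F a b = (\<lambda>\<sigma> \<tau>. if \<sigma> \<in> emb F \<and> \<tau> \<in> emb F then Re (\<sigma> a) * Re (\<tau> b) else 0)"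

definition qspanT :: "tens set \<Rightarrow> tens set" where
  "qspanT S = {(\<lambda>\<sigma> \<tau>. \<Sum>v\<in>T. real_of_rat (c v) * v \<sigma> \<tau>) | T c. finite T \<and> T \<subseteq> S}"

definition zspanT :: "tens set \<Rightarrow> tens set" where
  "zspanT S = {(\<lambda>\<sigma> \<tau>. \<Sum>v\<in>T. real_of_int (c v) * v \<sigma> \<tau>) | T c. finite T \<and> T \<subseteq> S}"

definition tensor_space :: "real set \<Rightarrow> tens set" where
  "tensor_space F = qspanT {tensor F a b | a b. a \<in> F \<and> b \<in> F}"

definition pairing :: "real set \<Rightarrow> tens \<Rightarrow> tens \<Rightarrow> real" where
  "pairing F t u = (\<Sum>\<sigma>\<in>emb F. \<Sum>\<tau>\<in>emb F. t \<sigma> \<tau> * u \<sigma> \<tau>)"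

text \<open>F-bimodule structure: \<lambda>(a\<otimes>b) = (\<lambda>a)\<otimes>b, (a\<otimes>b)\<lambda> = a\<otimes>(b\<lambda>).\<close>
definition lmult :: "real set \<Rightarrow> real \<Rightarrow> tens \<Rightarrow> tens" where
  "lmult F l t = (\<lambda>\<sigma> \<tau>. Re (\<sigma> l) * t \<sigma> \<tau>)"

definition rmult :: "real set \<Rightarrow> tens \<Rightarrow> real \<Rightarrow> tens" where
  "rmult F t l = (\<lambda>\<sigma> \<tau>. t \<sigma> \<tau> * Re (\<tau> l))"

definition Sym_Q :: "real set \<Rightarrow> tens set" where
  "Sym_Q F = {t \<in> tensor_space F. \<forall>\<sigma> \<tau>. t \<sigma> \<tau> = t \<tau> \<sigma>}"

definition Lambda1 :: "real set \<Rightarrow> tens set" where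
  "Lambda1 F = {t \<in> tensor_space F. \<forall>l\<in>F. lmult F l t = rmult F t l}"

text \<open>The quotient S_Q(F) = (F\<otimes>F)/<x\<otimes>y - y\<otimes>x> is represented by its isomorphic
  image under symmetrisation [t] \<mapsto> (t + t^T)/2; this is compatible with the
  pairing against Sym_Q(F).\<close>
definition symz :: "tens \<Rightarrow> tens" where
  "symz t = (\<lambda>\<sigma> \<tau>. (t \<sigma> \<tau> + t \<tau> \<sigma>) / 2)"

definition S_Q :: "real set \<Rightarrow> tens set" where
  "S_Q F = symz ` tensor_space F"

definition S_Z :: "real set \<Rightarrow> real set \<Rightarrow> tens set" where
  "S_Z F L = symz ` zspanT {tensor F a b | a b. a \<in> L \<and> b \<in> L}"

definition Ann_Lambda1 :: "real set \<Rightarrow> tens set" where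
  "Ann_Lambda1 F = {x \<in> S_Q F. \<forall>l\<in>Lambda1 F. pairing F x l = 0}"

text \<open>A stable curve of arithmetic genus g and geometric genus 0 without markings
  is encoded by its dual graph: vertices V (components, all rational), half-edges H
  (branches at nodes), vert h = component containing branch h, iota h = the other
  branch of the same node. w h is the weight attached to branch h.\<close>

definition weighted_stable_curve ::
  "real set \<Rightarrow> nat \<Rightarrow> real set \<Rightarrow> 'v set \<Rightarrow> 'h set \<Rightarrow> ('h \<Rightarrow> 'v) \<Rightarrow> ('h \<Rightarrow> 'h) \<Rightarrow> ('h \<Rightarrow> real) \<Rightarrow> bool"
where
  "weighted_stable_curve F g I V H vert iota w \<longleftrightarrow>
     finite V \<and> finite H \<and> V \<noteq> {} \<and>
     (\<forall>h\<in>H. vert h \<in> V \<and> iota h \<in> H \<and> iota h \<noteq> h \<and> iota (iota h) = h) \<and>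
     \<comment> \<open>connected\<close>
     (\<forall>u\<in>V. \<forall>v\<in>V. (u, v) \<in> (\<Union>h\<in>H. {(vert h, vert (iota h))})\<^sup>*) \<and>
     \<comment> \<open>stability: each rational component has at least 3 special points\<close>
     (\<forall>v\<in>V. card {h\<in>H. vert h = v} \<ge> 3) \<and>
     \<comment> \<open>arithmetic genus g = #nodes - #components + 1 (all components rational)\<close>
     card H + 2 = 2 * card V + 2 * g \<and>
     \<comment> \<open>weights\<close>
     (\<forall>h\<in>H. w h \<in> I \<and> w (iota h) = - w h) \<and>
     (\<forall>v\<in>V. (\<Sum>h\<in>{h\<in>H. vert h = v}. w h) = 0) \<and>
     zspanR (w ` H) = I"

definition N_S :: "real set \<Rightarrow> real set \<Rightarrow> tens set" where
  "N_S F R = {x \<in> S_Q F. \<forall>r\<in>R. pairing F x (tensor F r r) = 0}"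

definition C_S :: "real set \<Rightarrow> real set \<Rightarrow> tens set" where
  "C_S F R = {x \<in> S_Q F. \<forall>r\<in>R. pairing F x (tensor F r r) \<ge> 0}"

definition admissible :: "real set \<Rightarrow> real set \<Rightarrow> bool" where
  "admissible F R \<longleftrightarrow> C_S F R \<inter> Ann_Lambda1 F \<subseteq> N_S F R"

definition quot_rank :: "tens set \<Rightarrow> tens set \<Rightarrow> nat" where
  "quot_rank L L' = Sup {card B | B. finite B \<and> B \<subseteq> L \<and>
      (\<forall>c. (\<lambda>\<sigma> \<tau>. \<Sum>b\<in>B. real_of_int (c b) * b \<sigma> \<tau>) \<in> L' \<longrightarrow> (\<forall>b\<in>B. c b = 0))}"

text \<open>T_S = ker(p) = Hom(L/L', G_m) with L = N(S) \<inter> S_Z(I^\<or>) and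
  L' = N(S) \<inter> Ann(\<Lambda>^1) \<inter> S_Z(I^\<or>); its dimension is the rank of its character group L/L'.\<close>
definition RM_torus_dim :: "real set \<Rightarrow> real set \<Rightarrow> real set \<Rightarrow> nat" where
  "RM_torus_dim F I R =
     quot_rank (N_S F R \<inter> S_Z F (dual_lattice F I))
               (N_S F R \<inter> Ann_Lambda1 F \<inter> S_Z F (dual_lattice F I))"

end

theory Submission imports Defs begin

text \<open>Evaluating a tensor at the identity embedding gives the multiplication map
  \<open>S_Q(F) \<rightarrow> F\<close>, and every element of \<open>\<Lambda>\<^sup>1\<close> is diagonal, so the kernel of the
  multiplication map lies in \<open>Ann(\<Lambda>\<^sup>1)\<close>. If \<open>B\<close> were a family of at least \<open>g\<close> elements
  of \<open>N(S) \<inter> S_Z(I\<^sup>\<or>)\<close>, independent modulo \<open>Ann(\<Lambda>\<^sup>1)\<close>, then the \<open>g + 1\<close> products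
  \<open>r\<^sup>2\<close> (for a nonzero weight \<open>r\<close>) and \<open>mult(b)\<close>, \<open>b \<in> B\<close>, would satisfy a nontrivial
  integer relation \<open>e\<^sub>0 r\<^sup>2 + \<Sum> e\<^sub>b mult(b) = 0\<close> with \<open>e\<^sub>0 \<ge> 0\<close>. For \<open>e\<^sub>0 = 0\<close> the element
  \<open>\<Sum> e\<^sub>b b\<close> lies in \<open>Ann(\<Lambda>\<^sup>1)\<close>, against independence. For \<open>e\<^sub>0 > 0\<close> the element
  \<open>a = e\<^sub>0 r\<otimes>r + \<Sum> e\<^sub>b b\<close> lies in \<open>Ann(\<Lambda>\<^sup>1)\<close> and pairs nonnegatively with every \<open>s\<otimes>s\<close>, so
  admissibility puts it in \<open>N(S)\<close>; but \<open>\<langle>a, r\<otimes>r\<rangle> = e\<^sub>0 \<langle>r\<otimes>r, r\<otimes>r\<rangle> > 0\<close>.\<close>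

lemma
  assumes "subfield_real F"
  shows subfield_real_0: "0 \<in> F"
    and subfield_real_1: "1 \<in> F"
    and subfield_real_add: "x \<in> F \<Longrightarrow> y \<in> F \<Longrightarrow> x + y \<in> F"
    and subfield_real_mult: "x \<in> F \<Longrightarrow> y \<in> F \<Longrightarrow> x * y \<in> F"
    and subfield_real_uminus: "x \<in> F \<Longrightarrow> - x \<in> F"
    and subfield_real_inverse: "x \<in> F \<Longrightarrow> x \<noteq> 0 \<Longrightarrow> inverse x \<in> F"
  using assms unfolding subfield_real_def by auto

lemma subfield_real_sum:
  assumes "subfield_real F" "\<And>v. v \<in> T \<Longrightarrow> f v \<in> F"
  shows "sum f T \<in> F"
  using assms(2)
  by (induction T rule: infinite_finite_induct)
     (auto intro: subfield_real_0[OF assms(1)] subfield_real_add[OF assms(1)])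

lemma subfield_real_of_nat: "subfield_real F \<Longrightarrow> real n \<in> F"
  by (induction n) (auto intro: subfield_real_0 subfield_real_1 subfield_real_add)

lemma subfield_real_of_int:
  assumes "subfield_real F" shows "real_of_int i \<in> F"
proof (cases "i \<ge> 0")
  case True
  then show ?thesis using subfield_real_of_nat[OF assms, of "nat i"] by simp
next
  case False
  then show ?thesis
    using subfield_real_uminus[OF assms subfield_real_of_nat[OF assms, of "nat (- i)"]] by simp
qed

lemma subfield_real_of_rat:
  assumes "subfield_real F" shows "real_of_rat q \<in> F"
proof (cases q)
  case (Fract a b)
  then have "real_of_rat q = of_int a * inverse (of_int b)"
    by (simp add: of_rat_rat divide_inverse)
  then show ?thesis
    using Fract subfield_real_of_int[OF assms]
    by (simp add: subfield_real_mult[OF assms] subfield_real_inverse[OF assms])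
qed

lemma totally_real_imp_subfield_real: "totally_real F \<Longrightarrow> subfield_real F"
  unfolding totally_real_def number_field_def by auto

lemma totally_real_emb_real: "totally_real F \<Longrightarrow> \<sigma> \<in> emb F \<Longrightarrow> x \<in> F \<Longrightarrow> Im (\<sigma> x) = 0"
  unfolding totally_real_def using complex_is_Real_iff by blast

context
  fixes F \<sigma>
  assumes subfield: "subfield_real F" and \<sigma>: "\<sigma> \<in> emb F"
begin

lemma emb_add: "x \<in> F \<Longrightarrow> y \<in> F \<Longrightarrow> \<sigma> (x + y) = \<sigma> x + \<sigma> y"
  and emb_mult: "x \<in> F \<Longrightarrow> y \<in> F \<Longrightarrow> \<sigma> (x * y) = \<sigma> x * \<sigma> y"
  and emb_1: "\<sigma> 1 = 1"
  using \<sigma> unfolding emb_def by auto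

lemma emb_0: "\<sigma> 0 = 0"
  using emb_add[of 0 0] subfield_real_0[OF subfield] by simp

lemma emb_uminus: "x \<in> F \<Longrightarrow> \<sigma> (- x) = - \<sigma> x"
  using emb_add[of x "- x"] subfield_real_uminus[OF subfield] emb_0
  by (simp add: eq_neg_iff_add_eq_0 add.commute)

lemma emb_inverse: "x \<in> F \<Longrightarrow> x \<noteq> 0 \<Longrightarrow> \<sigma> (inverse x) = inverse (\<sigma> x)"
  using emb_mult[of x "inverse x"] subfield_real_inverse[OF subfield] emb_1
  by (metis inverse_unique right_inverse)

lemma emb_of_nat: "\<sigma> (real n) = of_nat n"
proof (induction n)
  case 0
  then show ?case using emb_0 by simp
next
  case (Suc n)
  have "\<sigma> (real (Suc n)) = \<sigma> (real n) + \<sigma> 1"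
    using emb_add subfield_real_of_nat[OF subfield] subfield_real_1[OF subfield]
    by (simp add: add.commute)
  then show ?case using Suc emb_1 by simp
qed

lemma emb_of_int: "\<sigma> (real_of_int i) = of_int i"
proof (cases "i \<ge> 0")
  case True
  then show ?thesis using emb_of_nat[of "nat i"] by simp
next
  case False
  then show ?thesis
    using emb_uminus[OF subfield_real_of_nat[OF subfield, of "nat (- i)"]] emb_of_nat[of "nat (- i)"]
    by simp
qed

lemma emb_of_rat: "\<sigma> (real_of_rat q) = of_real (of_rat q)"
proof (cases q)
  case (Fract a b)
  then have q: "real_of_rat q = of_int a * inverse (of_int b)"
    by (simp add: of_rat_rat divide_inverse)
  have "\<sigma> (of_int a * inverse (of_int b)) = \<sigma> (of_int a) * \<sigma> (inverse (of_int b))"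
    using Fract emb_mult subfield_real_of_int[OF subfield] subfield_real_inverse[OF subfield]
    by simp
  also have "\<dots> = of_int a * inverse (of_int b)"
    using Fract emb_of_int emb_inverse[OF subfield_real_of_int[OF subfield]] by simp
  finally show ?thesis using q Fract by (simp add: of_rat_rat divide_inverse)
qed

lemma emb_sum: "(\<And>v. v \<in> T \<Longrightarrow> f v \<in> F) \<Longrightarrow> \<sigma> (sum f T) = (\<Sum>v\<in>T. \<sigma> (f v))"
proof (induction T rule: infinite_finite_induct)
  case (insert x A)
  then have "\<sigma> (f x + sum f A) = \<sigma> (f x) + \<sigma> (sum f A)"
    using emb_add subfield_real_sum[OF subfield, of A f] by simp
  then show ?case using insert by simp
qed (simp_all add: emb_0)

end

definition real_emb :: "real set \<Rightarrow> real \<Rightarrow> complex" where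
  "real_emb F = (\<lambda>x. if x \<in> F then complex_of_real x else 0)"

lemma real_emb_in_emb: "subfield_real F \<Longrightarrow> real_emb F \<in> emb F"
  unfolding emb_def real_emb_def
  by (auto simp: subfield_real_add subfield_real_mult subfield_real_1)

definition tspan :: "('k::comm_ring_1 \<Rightarrow> real) \<Rightarrow> tens set \<Rightarrow> tens set" where
  "tspan \<phi> S = {(\<lambda>\<sigma> \<tau>. \<Sum>v\<in>T. \<phi> (c v) * v \<sigma> \<tau>) | T c. finite T \<and> T \<subseteq> S}"

lemma qspanT_eq_tspan: "qspanT S = tspan real_of_rat S"
  and zspanT_eq_tspan: "zspanT S = tspan real_of_int S"
  unfolding qspanT_def zspanT_def tspan_def by simp_all

locale coeff_hom =
  fixes \<phi> :: "'k::comm_ring_1 \<Rightarrow> real"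
  assumes add: "\<phi> (a + b) = \<phi> a + \<phi> b" and mult: "\<phi> (a * b) = \<phi> a * \<phi> b"
    and zero: "\<phi> 0 = 0" and one: "\<phi> 1 = 1"
begin

lemma tspan_base: "v \<in> S \<Longrightarrow> v \<in> tspan \<phi> S"
  unfolding tspan_def by (rule CollectI, intro exI[of _ "{v}"] exI[of _ "\<lambda>_. 1"]) (auto simp: one)

lemma tspan_zero: "(\<lambda>\<sigma> \<tau>. 0) \<in> tspan \<phi> S"
  unfolding tspan_def by (rule CollectI, intro exI[of _ "{}"]) auto

lemma tspan_smul:
  assumes "x \<in> tspan \<phi> S"
  shows "(\<lambda>\<sigma> \<tau>. \<phi> k * x \<sigma> \<tau>) \<in> tspan \<phi> S"
proof -
  obtain T c where x: "x = (\<lambda>\<sigma> \<tau>. \<Sum>v\<in>T. \<phi> (c v) * v \<sigma> \<tau>)" "finite T" "T \<subseteq> S"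
    using assms unfolding tspan_def by auto
  have "(\<lambda>\<sigma> \<tau>. \<phi> k * x \<sigma> \<tau>) = (\<lambda>\<sigma> \<tau>. \<Sum>v\<in>T. \<phi> (k * c v) * v \<sigma> \<tau>)"
    using x by (simp add: mult sum_distrib_left mult.assoc)
  then show ?thesis
    unfolding tspan_def using x(2,3) by (intro CollectI exI[of _ T] exI[of _ "\<lambda>v. k * c v"]) simp
qed

lemma tspan_add:
  assumes "x \<in> tspan \<phi> S" "y \<in> tspan \<phi> S"
  shows "(\<lambda>\<sigma> \<tau>. x \<sigma> \<tau> + y \<sigma> \<tau>) \<in> tspan \<phi> S"
proof -
  obtain T1 c1 where x: "x = (\<lambda>\<sigma> \<tau>. \<Sum>v\<in>T1. \<phi> (c1 v) * v \<sigma> \<tau>)" "finite T1" "T1 \<subseteq> S"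
    using assms(1) unfolding tspan_def by auto
  obtain T2 c2 where y: "y = (\<lambda>\<sigma> \<tau>. \<Sum>v\<in>T2. \<phi> (c2 v) * v \<sigma> \<tau>)" "finite T2" "T2 \<subseteq> S"
    using assms(2) unfolding tspan_def by auto
  define c where "c v = (if v \<in> T1 then c1 v else 0) + (if v \<in> T2 then c2 v else 0)" for v
  have "x \<sigma> \<tau> + y \<sigma> \<tau> = (\<Sum>v\<in>T1 \<union> T2. \<phi> (c v) * v \<sigma> \<tau>)" for \<sigma> \<tau>
  proof -
    have "(\<Sum>v\<in>T1 \<union> T2. \<phi> (c v) * v \<sigma> \<tau>) =
       (\<Sum>v\<in>T1 \<union> T2. if v \<in> T1 then \<phi> (c1 v) * v \<sigma> \<tau> else 0) +
       (\<Sum>v\<in>T1 \<union> T2. if v \<in> T2 then \<phi> (c2 v) * v \<sigma> \<tau> else 0)"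
      unfolding c_def sum.distrib[symmetric] by (rule sum.cong) (auto simp: add zero distrib_right)
    also have "\<dots> = x \<sigma> \<tau> + y \<sigma> \<tau>"
      using x y by (simp add: sum.inter_restrict[symmetric] Int_absorb1 Int_absorb2 Int_commute)
    finally show ?thesis by simp
  qed
  then show ?thesis
    unfolding tspan_def using x(2,3) y(2,3)
    by (intro CollectI exI[of _ "T1 \<union> T2"] exI[of _ c]) auto
qed

lemma tspan_sum:
  assumes "\<And>b. b \<in> B \<Longrightarrow> Z b \<in> tspan \<phi> S"
  shows "(\<lambda>\<sigma> \<tau>. \<Sum>b\<in>B. \<phi> (k b) * Z b \<sigma> \<tau>) \<in> tspan \<phi> S"
  using assms
proof (induction B rule: infinite_finite_induct)
  case (insert x A)
  have "Z x \<in> tspan \<phi> S" and "\<And>b. b \<in> A \<Longrightarrow> Z b \<in> tspan \<phi> S"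
    using insert.prems by auto
  then show ?case
    using insert.hyps tspan_add[OF tspan_smul[of "Z x" S "k x"] insert.IH] by simp
qed (simp_all add: tspan_zero)

lemma symz_tspan_sum:
  assumes "\<And>b. b \<in> B \<Longrightarrow> Z b \<in> symz ` tspan \<phi> S"
  shows "(\<lambda>\<sigma> \<tau>. \<Sum>b\<in>B. \<phi> (k b) * Z b \<sigma> \<tau>) \<in> symz ` tspan \<phi> S"
proof -
  obtain Z' where Z': "\<And>b. b \<in> B \<Longrightarrow> Z' b \<in> tspan \<phi> S \<and> Z b = symz (Z' b)"
    using bchoice[of B "\<lambda>b z. z \<in> tspan \<phi> S \<and> Z b = symz z"] assms by blast
  have "(\<lambda>\<sigma> \<tau>. \<Sum>b\<in>B. \<phi> (k b) * Z b \<sigma> \<tau>) = symz (\<lambda>\<sigma> \<tau>. \<Sum>b\<in>B. \<phi> (k b) * Z' b \<sigma> \<tau>)"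
    using Z' by (auto simp: symz_def sum.distrib[symmetric] sum_divide_distrib ring_distribs
        intro!: ext sum.cong)
  then show ?thesis using tspan_sum[of B Z'] Z' by simp
qed

end

interpretation int_coeff: coeff_hom real_of_int
  by unfold_locales auto

interpretation rat_coeff: coeff_hom real_of_rat
  by unfold_locales (auto simp: of_rat_add of_rat_mult)

lemma S_Q_int_comb:
  assumes "\<And>b. b \<in> B \<Longrightarrow> Z b \<in> S_Q F"
  shows "(\<lambda>\<sigma> \<tau>. \<Sum>b\<in>B. real_of_int (k b) * Z b \<sigma> \<tau>) \<in> S_Q F"
  using rat_coeff.symz_tspan_sum[of B Z _ "\<lambda>b. of_int (k b)"] assms
  by (simp add: S_Q_def tensor_space_def qspanT_eq_tspan)

lemma S_Z_int_comb:
  assumes "\<And>b. b \<in> B \<Longrightarrow> Z b \<in> S_Z F L"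
  shows "(\<lambda>\<sigma> \<tau>. \<Sum>b\<in>B. real_of_int (k b) * Z b \<sigma> \<tau>) \<in> S_Z F L"
  using int_coeff.symz_tspan_sum[of B Z] assms
  by (simp add: S_Z_def zspanT_eq_tspan)

lemma S_Q_add_smul:
  assumes "x \<in> S_Q F" "y \<in> S_Q F"
  shows "(\<lambda>\<sigma> \<tau>. real_of_int k * x \<sigma> \<tau> + y \<sigma> \<tau>) \<in> S_Q F"
proof -
  have "(\<lambda>\<sigma> \<tau>. \<Sum>b\<in>UNIV. real_of_int (if b then k else 1) * (if b then x else y) \<sigma> \<tau>) \<in> S_Q F"
    by (rule S_Q_int_comb) (use assms in auto)
  then show ?thesis by (simp add: UNIV_bool add.commute)
qed

lemma tensor_square_in_S_Q:
  assumes "r \<in> F" shows "tensor F r r \<in> S_Q F"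
proof -
  have "tensor F r r \<in> tensor_space F"
    unfolding tensor_space_def qspanT_eq_tspan using assms by (intro rat_coeff.tspan_base) auto
  moreover have "symz (tensor F r r) = tensor F r r"
    by (auto simp: symz_def tensor_def intro!: ext)
  ultimately show ?thesis unfolding S_Q_def by (metis image_eqI)
qed

lemma pairing_sum:
  "pairing F (\<lambda>\<sigma> \<tau>. \<Sum>b\<in>B. k b * Z b \<sigma> \<tau>) u = (\<Sum>b\<in>B. k b * pairing F (Z b) u)"
proof -
  have "pairing F (\<lambda>\<sigma> \<tau>. \<Sum>b\<in>B. k b * Z b \<sigma> \<tau>) u =
    (\<Sum>\<sigma>\<in>emb F. \<Sum>\<tau>\<in>emb F. \<Sum>b\<in>B. k b * (Z b \<sigma> \<tau> * u \<sigma> \<tau>))"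
    unfolding pairing_def by (simp add: sum_distrib_right mult.assoc)
  also have "\<dots> = (\<Sum>\<sigma>\<in>emb F. \<Sum>b\<in>B. \<Sum>\<tau>\<in>emb F. k b * (Z b \<sigma> \<tau> * u \<sigma> \<tau>))"
    by (rule sum.cong[OF refl], rule sum.swap)
  also have "\<dots> = (\<Sum>b\<in>B. \<Sum>\<sigma>\<in>emb F. \<Sum>\<tau>\<in>emb F. k b * (Z b \<sigma> \<tau> * u \<sigma> \<tau>))"
    by (rule sum.swap)
  also have "\<dots> = (\<Sum>b\<in>B. k b * pairing F (Z b) u)"
    unfolding pairing_def by (simp add: sum_distrib_left)
  finally show ?thesis .
qed

lemma pairing_add_smul:
  "pairing F (\<lambda>\<sigma> \<tau>. k * x \<sigma> \<tau> + y \<sigma> \<tau>) u = k * pairing F x u + pairing F y u"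
  unfolding pairing_def by (simp add: distrib_right sum.distrib sum_distrib_left mult.assoc)

lemma pairing_tensor_squares:
  "pairing F (tensor F r r) (tensor F s s) = (\<Sum>\<sigma>\<in>emb F. Re (\<sigma> r) * Re (\<sigma> s))\<^sup>2"
proof -
  have "pairing F (tensor F r r) (tensor F s s) =
     (\<Sum>\<sigma>\<in>emb F. \<Sum>\<tau>\<in>emb F. (Re (\<sigma> r) * Re (\<sigma> s)) * (Re (\<tau> r) * Re (\<tau> s)))"
    unfolding pairing_def tensor_def by (intro sum.cong refl) (simp add: algebra_simps)
  then show ?thesis by (simp add: sum_product power2_eq_square)
qed

lemma pairing_tensor_square_pos:
  assumes "subfield_real F" "finite (emb F)" "r \<in> F" "r \<noteq> 0"
  shows "pairing F (tensor F r r) (tensor F r r) > 0"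
proof -
  have "r * r = Re (real_emb F r) * Re (real_emb F r)"
    using assms(3) by (simp add: real_emb_def)
  also have "\<dots> \<le> (\<Sum>\<sigma>\<in>emb F. Re (\<sigma> r) * Re (\<sigma> r))"
    using assms real_emb_in_emb by (intro member_le_sum) auto
  finally have "r * r \<le> (\<Sum>\<sigma>\<in>emb F. Re (\<sigma> r) * Re (\<sigma> r))" .
  moreover have "0 < r * r" using assms(4) not_real_square_gt_zero by blast
  ultimately show ?thesis by (simp add: pairing_tensor_squares)
qed

definition mult_map :: "real set \<Rightarrow> tens \<Rightarrow> real" where
  "mult_map F x = x (real_emb F) (real_emb F)"

lemma mult_map_sum:
  "mult_map F (\<lambda>\<sigma> \<tau>. \<Sum>b\<in>B. k b * Z b \<sigma> \<tau>) = (\<Sum>b\<in>B. k b * mult_map F (Z b))"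
  by (simp add: mult_map_def)

lemma mult_map_tensor:
  "subfield_real F \<Longrightarrow> a \<in> F \<Longrightarrow> b \<in> F \<Longrightarrow> mult_map F (tensor F a b) = a * b"
  using real_emb_in_emb by (simp add: mult_map_def tensor_def real_emb_def)

lemma tensor_diagonal:
  assumes "totally_real F" "a \<in> F" "b \<in> F" "\<sigma> \<in> emb F"
  shows "tensor F a b \<sigma> \<sigma> = Re (\<sigma> (a * b))"
  using assms emb_mult[OF totally_real_imp_subfield_real[OF assms(1)] assms(4)]
    totally_real_emb_real[OF assms(1,4)]
  by (simp add: tensor_def)

lemma tensor_space_diagonal:
  assumes tr: "totally_real F" and z: "z \<in> tensor_space F" and \<sigma>: "\<sigma> \<in> emb F"
  shows "mult_map F z \<in> F" and "z \<sigma> \<sigma> = Re (\<sigma> (mult_map F z))"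
proof -
  have sf: "subfield_real F" using tr by (rule totally_real_imp_subfield_real)
  obtain T c where z_eq: "z = (\<lambda>\<sigma> \<tau>. \<Sum>v\<in>T. real_of_rat (c v) * v \<sigma> \<tau>)"
    and T: "T \<subseteq> {tensor F a b | a b. a \<in> F \<and> b \<in> F}"
    using z unfolding tensor_space_def qspanT_def by blast
  have T_diag: "mult_map F v \<in> F \<and> v \<sigma> \<sigma> = Re (\<sigma> (mult_map F v))" if "v \<in> T" for v
    using T that mult_map_tensor[OF sf] tensor_diagonal[OF tr _ _ \<sigma>] subfield_real_mult[OF sf]
    by auto
  have summand_in_F: "real_of_rat (c v) * mult_map F v \<in> F" if "v \<in> T" for v
    using T_diag[OF that] subfield_real_mult[OF sf] subfield_real_of_rat[OF sf] by blast
  have mult_z: "mult_map F z = (\<Sum>v\<in>T. real_of_rat (c v) * mult_map F v)"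
    unfolding z_eq by (rule mult_map_sum)
  show "mult_map F z \<in> F"
    unfolding mult_z by (rule subfield_real_sum[OF sf summand_in_F])
  have "\<sigma> (mult_map F z) = (\<Sum>v\<in>T. of_real (of_rat (c v)) * \<sigma> (mult_map F v))"
    unfolding mult_z using T_diag summand_in_F subfield_real_of_rat[OF sf]
    by (simp add: emb_sum[OF sf \<sigma>] emb_mult[OF sf \<sigma>] emb_of_rat[OF sf \<sigma>])
  then show "z \<sigma> \<sigma> = Re (\<sigma> (mult_map F z))"
    using T_diag by (simp add: z_eq)
qed

lemma S_Q_mult_map_in_field:
  assumes "totally_real F" "x \<in> S_Q F"
  shows "mult_map F x \<in> F"
  using assms tensor_space_diagonal(1)[OF assms(1) _ real_emb_in_emb]
    totally_real_imp_subfield_real[OF assms(1)]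
  by (auto simp: S_Q_def symz_def mult_map_def)

lemma S_Q_diagonal:
  assumes "totally_real F" "x \<in> S_Q F" "\<sigma> \<in> emb F"
  shows "x \<sigma> \<sigma> = Re (\<sigma> (mult_map F x))"
  using assms tensor_space_diagonal(2)[OF assms(1) _ assms(3)]
  by (auto simp: S_Q_def symz_def mult_map_def)

lemma Lambda1_off_diagonal:
  assumes tr: "totally_real F" and l: "l \<in> Lambda1 F"
    and \<sigma>\<tau>: "\<sigma> \<in> emb F" "\<tau> \<in> emb F" "\<sigma> \<noteq> \<tau>"
  shows "l \<sigma> \<tau> = 0"
proof -
  obtain x where x: "\<sigma> x \<noteq> \<tau> x" using \<sigma>\<tau>(3) by blast
  have "x \<in> F"
  proof (rule ccontr)
    assume "x \<notin> F"
    then show False using x \<sigma>\<tau>(1,2) unfolding emb_def by auto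
  qed
  then have "Re (\<sigma> x) \<noteq> Re (\<tau> x)"
    using x totally_real_emb_real[OF tr \<sigma>\<tau>(1)] totally_real_emb_real[OF tr \<sigma>\<tau>(2)]
    by (simp add: complex_eq_iff)
  moreover have "lmult F x l \<sigma> \<tau> = rmult F l x \<sigma> \<tau>"
    using l \<open>x \<in> F\<close> unfolding Lambda1_def by auto
  then have "(Re (\<sigma> x) - Re (\<tau> x)) * l \<sigma> \<tau> = 0"
    unfolding lmult_def rmult_def by (simp add: algebra_simps)
  ultimately show ?thesis by simp
qed

lemma mult_map_kernel_in_Ann_Lambda1:
  assumes tr: "totally_real F" and x: "x \<in> S_Q F" and "mult_map F x = 0"
  shows "x \<in> Ann_Lambda1 F"
proof -
  have sf: "subfield_real F" using tr by (rule totally_real_imp_subfield_real)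
  have "x \<sigma> \<tau> * l \<sigma> \<tau> = 0"
    if "l \<in> Lambda1 F" "\<sigma> \<in> emb F" "\<tau> \<in> emb F" for l \<sigma> \<tau>
  proof (cases "\<sigma> = \<tau>")
    case True
    then show ?thesis using assms S_Q_diagonal[OF tr x that(3)] emb_0[OF sf that(3)] by simp
  next
    case False
    then show ?thesis using that Lambda1_off_diagonal[OF tr] by simp
  qed
  then show ?thesis
    using x unfolding Ann_Lambda1_def pairing_def by (auto intro!: sum.neutral)
qed

lemma S_Q_subset_Ann_Lambda1_if_infinite: "infinite (emb F) \<Longrightarrow> S_Q F \<subseteq> Ann_Lambda1 F"
  unfolding Ann_Lambda1_def pairing_def by auto

interpretation rat_real: vector_space "\<lambda>(q::rat) (x::real). real_of_rat q * x"
  by unfold_locales (auto simp: algebra_simps of_rat_add of_rat_mult)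

lemma qspanR_subset_span: "qspanR Bs \<subseteq> rat_real.span Bs"
proof
  fix x assume "x \<in> qspanR Bs"
  then obtain T c where x: "x = (\<Sum>v\<in>T. real_of_rat (c v) * v)" and T: "T \<subseteq> Bs"
    unfolding qspanR_def by blast
  show "x \<in> rat_real.span Bs"
    unfolding x by (rule rat_real.span_sum, rule rat_real.span_scale, rule rat_real.span_base)
      (use T in blast)
qed

lemma rat_relation_of_large_family:
  fixes f :: "'j \<Rightarrow> real"
  assumes fin: "finite Bs" "finite J" and card: "card Bs < card J"
    and f: "\<forall>j\<in>J. f j \<in> qspanR Bs"
  shows "\<exists>d. (\<Sum>j\<in>J. real_of_rat (d j) * f j) = 0 \<and> (\<exists>j\<in>J. d j \<noteq> 0)"
proof (cases "inj_on f J")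
  case False
  then obtain j1 j2 where j: "j1 \<in> J" "j2 \<in> J" "j1 \<noteq> j2" "f j1 = f j2"
    unfolding inj_on_def by blast
  define d where "d j = (if j = j1 then 1 else if j = j2 then -1 else (0::rat))" for j
  have "(\<Sum>j\<in>J. real_of_rat (d j) * f j)
      = (\<Sum>j\<in>J. (if j = j1 then f j1 else 0) + (if j = j2 then - f j2 else 0))"
    by (rule sum.cong) (use j in \<open>auto simp: d_def\<close>)
  also have "\<dots> = 0" using j fin by (simp add: sum.distrib)
  finally show ?thesis using j by (intro exI[of _ d]) (auto simp: d_def)
next
  case True
  have "\<not> rat_real.independent (f ` J)"
  proof
    assume "rat_real.independent (f ` J)"
    moreover have "f ` J \<subseteq> rat_real.span Bs" using f qspanR_subset_span by blast
    ultimately have "card (f ` J) \<le> card Bs" using rat_real.independent_span_bound[OF fin(1)] by blast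
    then show False using card_image[OF True] card by simp
  qed
  then obtain t u where t: "finite t" "t \<subseteq> f ` J" "(\<Sum>v\<in>t. real_of_rat (u v) * v) = 0"
    and u: "\<exists>v\<in>t. u v \<noteq> 0"
    unfolding rat_real.dependent_explicit by blast
  define d where "d j = (if f j \<in> t then u (f j) else 0)" for j
  define J' where "J' = {j \<in> J. f j \<in> t}"
  have fJ': "f ` J' = t" using t(2) unfolding J'_def by blast
  have inj': "inj_on f J'" using True unfolding J'_def by (rule inj_on_subset) blast
  have "(\<Sum>j\<in>J. real_of_rat (d j) * f j) = (\<Sum>j\<in>J. if f j \<in> t then real_of_rat (u (f j)) * f j else 0)"
    by (rule sum.cong) (auto simp: d_def)
  also have "\<dots> = (\<Sum>j\<in>J'. real_of_rat (u (f j)) * f j)"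
    unfolding J'_def using fin(2) by (simp add: sum.inter_filter)
  also have "\<dots> = (\<Sum>v\<in>t. real_of_rat (u v) * v)"
    unfolding fJ'[symmetric] by (simp add: sum.reindex[OF inj'])
  finally have "(\<Sum>j\<in>J. real_of_rat (d j) * f j) = 0" using t(3) by simp
  moreover obtain j where "j \<in> J" "d j \<noteq> 0" using u t(2) unfolding d_def by fastforce
  ultimately show ?thesis by blast
qed

lemma rat_common_denominator:
  fixes d :: "'a \<Rightarrow> rat"
  assumes "finite A"
  shows "\<exists>m::int. m > 0 \<and> (\<forall>a\<in>A. \<exists>k::int. of_int m * d a = of_int k)"
  using assms
proof (induction A rule: finite_induct)
  case empty
  then show ?case by (intro exI[of _ 1]) auto
next
  case (insert x A)
  then obtain m where m: "m > 0" "\<forall>a\<in>A. \<exists>k::int. of_int m * d a = of_int k" by blast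
  obtain p q where pq: "d x = Fract p q" "q > 0" by (cases "d x") auto
  have dx: "d x = of_int p / of_int q" using pq by (simp add: Fract_of_int_quotient)
  have "\<exists>k::int. of_int (m * q) * d a = of_int k" if "a \<in> insert x A" for a
  proof (cases "a = x")
    case True
    have "of_int (m * q) * d x = of_int (m * p)"
      unfolding dx using pq(2) by (simp add: field_simps)
    then show ?thesis using True by blast
  next
    case False
    then have "a \<in> A" using that by simp
    then obtain k where "of_int m * d a = of_int k" using m(2) by blast
    then have "of_int (m * q) * d a = of_int (q * k)"
      by (metis mult.assoc mult.commute of_int_mult)
    then show ?thesis by blast
  qed
  then show ?case using m(1) pq(2) by (intro exI[of _ "m * q"]) simp
qed

lemma int_relation_of_large_family:
  fixes f :: "'j \<Rightarrow> real"
  assumes "finite Bs" "finite J" "card Bs < card J" "\<forall>j\<in>J. f j \<in> qspanR Bs"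
  shows "\<exists>K. (\<Sum>j\<in>J. real_of_int (K j) * f j) = 0 \<and> (\<exists>j\<in>J. K j \<noteq> 0)"
proof -
  obtain d where d: "(\<Sum>j\<in>J. real_of_rat (d j) * f j) = 0" "\<exists>j\<in>J. d j \<noteq> 0"
    using rat_relation_of_large_family[OF assms] by blast
  obtain m where m: "m > 0" "\<forall>j\<in>J. \<exists>k::int. of_int m * d j = of_int k"
    using rat_common_denominator[OF assms(2)] by blast
  then obtain K where K: "\<And>j. j \<in> J \<Longrightarrow> of_int m * d j = of_int (K j)"
    by metis
  have K_real: "real_of_int (K j) = real_of_int m * real_of_rat (d j)" if "j \<in> J" for j
    using arg_cong[OF K[OF that], of real_of_rat] by (simp add: of_rat_mult)
  have "(\<Sum>j\<in>J. real_of_int (K j) * f j) = real_of_int m * (\<Sum>j\<in>J. real_of_rat (d j) * f j)"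
    by (simp add: sum_distrib_left K_real mult.assoc cong: sum.cong)
  moreover have "\<exists>j\<in>J. K j \<noteq> 0"
  proof -
    obtain j where "j \<in> J" "d j \<noteq> 0" using d(2) by blast
    then show ?thesis using K_real[of j] m(1) by (intro bexI[of _ j]) auto
  qed
  ultimately show ?thesis using d(1) by auto
qed

definition int_independent_mod :: "tens set \<Rightarrow> tens set \<Rightarrow> bool" where
  "int_independent_mod L' B \<longleftrightarrow>
     (\<forall>c. (\<lambda>\<sigma> \<tau>. \<Sum>b\<in>B. real_of_int (c b) * b \<sigma> \<tau>) \<in> L' \<longrightarrow> (\<forall>b\<in>B. c b = 0))"

lemma N_S_S_Z_int_comb:
  assumes "B \<subseteq> N_S F R \<inter> S_Z F L"
  shows "(\<lambda>\<sigma> \<tau>. \<Sum>b\<in>B. real_of_int (c b) * b \<sigma> \<tau>) \<in> N_S F R \<inter> S_Z F L"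
proof -
  have "(\<lambda>\<sigma> \<tau>. \<Sum>b\<in>B. real_of_int (c b) * b \<sigma> \<tau>) \<in> S_Q F"
    using assms by (intro S_Q_int_comb) (auto simp: N_S_def)
  moreover have "(\<lambda>\<sigma> \<tau>. \<Sum>b\<in>B. real_of_int (c b) * b \<sigma> \<tau>) \<in> S_Z F L"
    using assms by (intro S_Z_int_comb) auto
  ultimately show ?thesis
    using assms by (auto simp: N_S_def pairing_sum intro!: sum.neutral)
qed

lemma admissible_no_positive_diagonal_relation:
  assumes tr: "totally_real F" and fin: "finite (emb F)" and adm: "admissible F R"
    and r: "r \<in> R" "r \<in> F" "r \<noteq> 0"
    and y: "y \<in> N_S F R" and e0: "e0 > 0"
    and rel: "mult_map F y = - (real_of_int e0 * (r * r))"
  shows False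
proof -
  have sf: "subfield_real F" using tr by (rule totally_real_imp_subfield_real)
  have y_pairing: "y \<in> S_Q F" "\<And>s. s \<in> R \<Longrightarrow> pairing F y (tensor F s s) = 0"
    using y by (auto simp: N_S_def)
  define a where "a = (\<lambda>\<sigma> \<tau>. real_of_int e0 * tensor F r r \<sigma> \<tau> + y \<sigma> \<tau>)"
  have a: "a \<in> S_Q F"
    unfolding a_def by (rule S_Q_add_smul[OF tensor_square_in_S_Q[OF r(2)] y_pairing(1)])
  have "mult_map F a = 0"
    using rel mult_map_tensor[OF sf r(2) r(2)] by (simp add: a_def mult_map_def)
  then have "a \<in> Ann_Lambda1 F" using mult_map_kernel_in_Ann_Lambda1[OF tr a] by blast
  moreover have "a \<in> C_S F R"
    using a e0 y_pairing(2)
    by (auto simp: C_S_def a_def pairing_add_smul pairing_tensor_squares)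
  ultimately have "a \<in> N_S F R" using adm unfolding admissible_def by blast
  then have "pairing F a (tensor F r r) = 0" using r(1) unfolding N_S_def by blast
  then have "real_of_int e0 * pairing F (tensor F r r) (tensor F r r) = 0"
    using y_pairing(2)[OF r(1)] by (simp add: a_def pairing_add_smul)
  then show False
    using e0 pairing_tensor_square_pos[OF sf fin r(2,3)] by simp
qed

lemma admissible_diagonal_relation_trivial:
  assumes tr: "totally_real F" and fin: "finite (emb F)" and adm: "admissible F R"
    and r: "r \<in> R" "r \<in> F" "r \<noteq> 0"
    and B: "B \<subseteq> N_S F R \<inter> S_Z F L"
    and indep: "int_independent_mod (N_S F R \<inter> Ann_Lambda1 F \<inter> S_Z F L) B"
    and rel: "real_of_int e0 * (r * r) + (\<Sum>b\<in>B. real_of_int (e b) * mult_map F b) = 0"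
  shows "e0 = 0 \<and> (\<forall>b\<in>B. e b = 0)"
proof -
  define y where "y s = (\<lambda>\<sigma> \<tau>. \<Sum>b\<in>B. real_of_int (s * e b) * b \<sigma> \<tau>)" for s :: int
  have y: "y s \<in> N_S F R \<inter> S_Z F L" for s
    unfolding y_def using B by (rule N_S_S_Z_int_comb)
  have rel': "(\<Sum>b\<in>B. real_of_int (e b) * mult_map F b) = - (real_of_int e0 * (r * r))"
    using rel by linarith
  have mult_y: "mult_map F (y s) = - (real_of_int (s * e0) * (r * r))" for s
    unfolding y_def mult_map_sum using rel' by (simp add: sum_distrib_left[symmetric] mult.assoc)
  have "e0 = 0"
  proof (rule ccontr)
    assume "e0 \<noteq> 0"
    \<comment> \<open>scaling the relation by \<open>sgn e0\<close> makes its \<open>r\<^sup>2\<close>-coefficient positive\<close>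
    then have "sgn e0 * e0 > 0" by (simp add: sgn_if)
    then show False
      using admissible_no_positive_diagonal_relation[OF tr fin adm r _ _ mult_y] y by blast
  qed
  moreover have "y 1 \<in> Ann_Lambda1 F"
    using mult_map_kernel_in_Ann_Lambda1[OF tr] y[of 1] mult_y[of 1] \<open>e0 = 0\<close>
    by (simp add: N_S_def)
  ultimately show ?thesis
    using indep y[of 1] by (simp add: y_def int_independent_mod_def)
qed

lemma independent_mod_Ann_Lambda1_card_le:
  assumes tr: "totally_real F" and Bs: "qbasisR Bs F" and adm: "admissible F R"
    and r: "r \<in> R" "r \<in> F" "r \<noteq> 0"
    and B: "finite B" "B \<subseteq> N_S F R \<inter> S_Z F L"
    and indep: "int_independent_mod (N_S F R \<inter> Ann_Lambda1 F \<inter> S_Z F L) B"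
  shows "card B \<le> card Bs - 1"
proof (cases "finite (emb F)")
  case False
  \<comment> \<open>not ruled out by the definitions; every pairing is then a sum over an infinite set, i.e. 0\<close>
  then have "(\<lambda>\<sigma> \<tau>. \<Sum>b\<in>B. real_of_int 1 * b \<sigma> \<tau>) \<in> N_S F R \<inter> Ann_Lambda1 F \<inter> S_Z F L"
    using N_S_S_Z_int_comb[OF B(2), of "\<lambda>_. 1"] S_Q_subset_Ann_Lambda1_if_infinite
    by (auto simp: N_S_def)
  then have "B = {}" using indep unfolding int_independent_mod_def by fastforce
  then show ?thesis by simp
next
  case True
  show ?thesis
  proof (rule ccontr)
    assume not_le: "\<not> card B \<le> card Bs - 1"
    define J where "J = insert None (Some ` B)"
    define f where "f j = (case j of None \<Rightarrow> r * r | Some b \<Rightarrow> mult_map F b)" for j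
    have "card J = card B + 1"
      unfolding J_def using B(1) by (simp add: card_image)
    then have "card Bs < card J" using not_le by simp
    moreover have "\<forall>j\<in>J. f j \<in> qspanR Bs"
      using Bs B(2) S_Q_mult_map_in_field[OF tr] r(2)
        subfield_real_mult[OF totally_real_imp_subfield_real[OF tr]]
      by (auto simp: J_def f_def qbasisR_def N_S_def)
    ultimately obtain K where K: "(\<Sum>j\<in>J. real_of_int (K j) * f j) = 0" "\<exists>j\<in>J. K j \<noteq> 0"
      using int_relation_of_large_family[of Bs J f] Bs B(1)
      by (auto simp: qbasisR_def J_def)
    have "real_of_int (K None) * (r * r)
        + (\<Sum>b\<in>B. real_of_int (K (Some b)) * mult_map F b) = 0"
      using K(1) B(1) by (simp add: J_def f_def sum.reindex)
    then have "K None = 0 \<and> (\<forall>b\<in>B. K (Some b) = 0)"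
      by (rule admissible_diagonal_relation_trivial[OF tr True adm r B(2) indep])
    then show False using K(2) by (auto simp: J_def)
  qed
qed

lemma quot_rank_le:
  assumes "\<And>B. finite B \<Longrightarrow> B \<subseteq> L \<Longrightarrow> int_independent_mod L' B \<Longrightarrow> card B \<le> n"
  shows "quot_rank L L' \<le> n"
proof -
  let ?S = "{card B |B. finite B \<and> B \<subseteq> L \<and> int_independent_mod L' B}"
  have "card {} \<in> ?S" by (intro CollectI exI[of _ "{}"]) (simp add: int_independent_mod_def)
  then have "?S \<noteq> {}" by (metis emptyE)
  moreover have "x \<le> n" if "x \<in> ?S" for x
    using that assms by blast
  ultimately have "Sup ?S \<le> n" by (rule cSup_least)
  then show ?thesis by (simp add: quot_rank_def int_independent_mod_def)
qed

lemma field_degree_eq_card_basis: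
  assumes "number_field F"
  obtains Bs where "qbasisR Bs F" "field_degree F = card Bs"
proof -
  have ex: "\<exists>B. qbasisR B F" using assms unfolding number_field_def by blast
  show thesis
    using that[OF someI_ex[OF ex]] ex unfolding field_degree_def qdimR_def by simp
qed

lemma zspanR_subset_field:
  assumes "subfield_real F" "S \<subseteq> F" shows "zspanR S \<subseteq> F"
proof
  fix x assume "x \<in> zspanR S"
  then obtain T c where "x = (\<Sum>v\<in>T. real_of_int (c v) * v)" "T \<subseteq> S"
    unfolding zspanR_def by blast
  then show "x \<in> F"
    using assms subfield_real_mult[OF assms(1)] subfield_real_of_int[OF assms(1)]
    by (auto intro!: subfield_real_sum[OF assms(1)])
qed

lemma weighted_stable_curve_nonzero_weight:
  assumes sf: "subfield_real F" and I: "is_lattice F I"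
    and w: "weighted_stable_curve F g I V H vert iota w"
  obtains r where "r \<in> w ` H" "r \<in> F" "r \<noteq> 0"
proof -
  obtain Bl where Bl: "qbasisR Bl F" "I = zspanR Bl" using I unfolding is_lattice_def by blast
  have I_F: "I \<subseteq> F" using Bl sf zspanR_subset_field by (auto simp: qbasisR_def)
  have w_I: "w ` H \<subseteq> I" "zspanR (w ` H) = I" using w by (auto simp: weighted_stable_curve_def)
  have "\<exists>r\<in>w ` H. r \<noteq> 0"
  proof (rule ccontr)
    assume "\<not> ?thesis"
    then have "I \<subseteq> {0}" using w_I(2) by (auto simp: zspanR_def intro!: sum.neutral)
    moreover have "Bl \<subseteq> I"
      unfolding Bl(2) zspanR_def by (auto intro!: exI[of _ "{_}"] exI[of _ "\<lambda>_. 1"])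
    ultimately have "F \<subseteq> {0}"
      using Bl(1) by (auto simp: qbasisR_def qspanR_def subset_iff intro!: sum.neutral)
    then show False using subfield_real_1[OF sf] by auto
  qed
  then show ?thesis using that w_I(1) I_F by blast
qed

theorem proposition3p4:
  fixes F :: "real set" and g :: nat and I :: "real set"
    and V :: "'v set" and H :: "'h set" and vert :: "'h \<Rightarrow> 'v"
    and iota :: "'h \<Rightarrow> 'h" and w :: "'h \<Rightarrow> real"
  assumes "totally_real F"
    and "field_degree F = g"
    and "is_lattice F I"
    and "weighted_stable_curve F g I V H vert iota w"
    and "admissible F (w ` H)"
  shows "RM_torus_dim F I (w ` H) \<le> g - 1"
proof -
  have sf: "subfield_real F" using assms(1) by (rule totally_real_imp_subfield_real)
  obtain Bs where Bs: "qbasisR Bs F" "g = card Bs"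
    using field_degree_eq_card_basis assms(1,2) unfolding totally_real_def by metis
  obtain r where r: "r \<in> w ` H" "r \<in> F" "r \<noteq> 0"
    using weighted_stable_curve_nonzero_weight[OF sf assms(3,4)] .
  show ?thesis
    unfolding RM_torus_dim_def Bs(2)
    by (rule quot_rank_le, rule independent_mod_Ann_Lambda1_card_le[OF assms(1) Bs(1) assms(5) r])
qed

end
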